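(* Let $k\geq 1$ and $n\geq 0$ be integers, and let $m$ be an integer with $\lfloor n/(k+1)\rfloor \leq m \leq \lfloor n/k\rfloor$. Then \[ \sum_{i=0}^{n} f_i^{(k)} = \sum_{j=0}^{m} (-1)^{j} \binom{n-jk}{j}2^{n-j(k+1)}. \]
   Context: For an integer $k\geq 1$, the $k$-bonacci numbers $f_n^{(k)}$ ($n\in\mathbb{Z}$) are defined by $f_n^{(k)}=0$ for $n<0$, $f_0^{(k)}=1$, and $f_n^{(k)}=\sum_{i=1}^{k} f_{n-i}^{(k)}$ for $n\geq 1$. Here $\lfloor x\rfloor$ is the floor function, and $\binom{a}{b}=0$ when $0\le a<b$. *)

theory Defs
  imports Complex_Main
begin

function kbonacci :: "nat \<Rightarrow> int \<Rightarrow> int" where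
  "kbonacci k n = (if n < 0 then 0 else if n = 0 then 1
                   else (\<Sum>i\<in>{1..int k}. kbonacci k (n - i)))"
  by auto
termination
  by (relation "measure (\<lambda>(k, n). nat (n + 1))") auto

end

theory Submission
  imports Defs
begin

text \<open>Both sides, as functions of \<open>n\<close>, satisfy \<open>S(n+1) = 2 S(n) - S(n-k)\<close> (with \<open>S\<close> vanishing
  at negative arguments) and equal \<open>1\<close> at \<open>n = 0\<close>. For the partial sums this is
  \<open>f(n+1) = S(n) - S(n-k)\<close>; for the alternating binomial sum it is Pascal's rule
  applied to each term. The bounds on \<open>m\<close> only ensure that the sum stops after every
  nonzero term (those with \<open>j(k+1) \<le> n\<close>) while \<open>n - jk\<close> stays nonnegative.\<close>

definition signed_binomial :: "'a::comm_ring_1 \<Rightarrow> nat \<Rightarrow> nat \<Rightarrow> 'a" where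
  "signed_binomial x a j = (-1) ^ j * of_nat (a choose j) * x ^ (a - j)"

lemma signed_binomial_eq_0: "a < j \<Longrightarrow> signed_binomial x a j = 0"
  by (simp add: signed_binomial_def binomial_eq_0)

lemma signed_binomial_Suc_Suc:
  "signed_binomial x (Suc a) (Suc j) = x * signed_binomial x a (Suc j) - signed_binomial x a j"
proof (cases "j < a")
  case True
  then have "x ^ (a - j) = x * x ^ (a - Suc j)"
    by (metis Suc_diff_Suc power_Suc)
  then show ?thesis
    by (simp add: signed_binomial_def algebra_simps)
next
  case False
  then show ?thesis
    by (cases "j = a") (simp_all add: signed_binomial_def binomial_eq_0)
qed

lemma signed_binomial_diff_eq_0:
  assumes "n < j * (k + 1)"
  shows "signed_binomial x (n - j * k) j = 0"
proof (rule signed_binomial_eq_0)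
  show "n - j * k < j"
    using assms by (cases j) (auto simp: algebra_simps)
qed

definition kbonacci_closed :: "'a::comm_ring_1 \<Rightarrow> nat \<Rightarrow> nat \<Rightarrow> 'a" where
  "kbonacci_closed x k n = (\<Sum>j\<le>n. signed_binomial x (n - j * k) j)"

lemma kbonacci_closed_eq_sum_atMost:
  assumes "n div (k + 1) \<le> M"
  shows "(\<Sum>j\<le>M. signed_binomial x (n - j * k) j) = kbonacci_closed x k n"
proof -
  have vanish: "signed_binomial x (n - j * k) j = 0" if "n div (k + 1) < j" for j
    using that by (intro signed_binomial_diff_eq_0) (simp add: div_less_iff_less_mult)
  have "(\<Sum>j\<le>N. signed_binomial x (n - j * k) j)
      = (\<Sum>j\<le>n div (k + 1). signed_binomial x (n - j * k) j)" if "n div (k + 1) \<le> N" for N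
    using that vanish by (intro sum.mono_neutral_right) auto
  from this[OF assms] this[of n] show ?thesis
    by (simp add: kbonacci_closed_def div_le_dividend)
qed

lemma signed_binomial_diff_Suc_Suc:
  "signed_binomial x (Suc n - Suc j * k) (Suc j)
     = x * signed_binomial x (n - Suc j * k) (Suc j)
       - (if k \<le> n then signed_binomial x (n - k - j * k) j else 0)"
proof (cases "Suc j * k \<le> n")
  case True
  then have "Suc n - Suc j * k = Suc (n - Suc j * k)" and "k \<le> n"
    by (auto intro: le_trans[of k "Suc j * k"])
  then show ?thesis
    by (simp add: signed_binomial_Suc_Suc diff_diff_add add.commute)
next
  case False
  then have "Suc n - Suc j * k = 0" and "n - Suc j * k = 0"
    and "k \<le> n \<Longrightarrow> n - k - j * k < j"
    by (cases j; auto simp: algebra_simps)+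
  then show ?thesis
    by (simp add: signed_binomial_eq_0)
qed

lemma kbonacci_closed_Suc:
  "kbonacci_closed x k (Suc n)
     = x * kbonacci_closed x k n - (if k \<le> n then kbonacci_closed x k (n - k) else 0)"
proof -
  let ?t = "\<lambda>n j. signed_binomial x (n - j * k) j"
  have "kbonacci_closed x k (Suc n) = ?t (Suc n) 0 + (\<Sum>j\<le>n. ?t (Suc n) (Suc j))"
    unfolding kbonacci_closed_def by (rule sum.atMost_Suc_shift)
  also have "\<dots> = x * ?t n 0 + (\<Sum>j\<le>n. x * ?t n (Suc j)
                     - (if k \<le> n then ?t (n - k) j else 0))"
    unfolding sum.cong[OF refl signed_binomial_diff_Suc_Suc] by (simp add: signed_binomial_def)
  also have "\<dots> = x * (?t n 0 + (\<Sum>j\<le>n. ?t n (Suc j)))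
                   - (if k \<le> n then \<Sum>j\<le>n. ?t (n - k) j else 0)"
    by (cases "k \<le> n") (simp_all add: sum_subtractf sum_distrib_left algebra_simps)
  also have "\<dots> = x * (\<Sum>j\<le>Suc n. ?t n j) - (if k \<le> n then \<Sum>j\<le>n. ?t (n - k) j else 0)"
    by (simp only: sum.atMost_Suc_shift)
  also have "\<dots> = x * kbonacci_closed x k n - (if k \<le> n then kbonacci_closed x k (n - k) else 0)"
  proof -
    have "(\<Sum>j\<le>Suc n. ?t n j) = kbonacci_closed x k n"
      by (intro kbonacci_closed_eq_sum_atMost le_SucI div_le_dividend)
    moreover have "(\<Sum>j\<le>n. ?t (n - k) j) = kbonacci_closed x k (n - k)"
      by (intro kbonacci_closed_eq_sum_atMost) (meson div_le_dividend diff_le_self le_trans)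
    ultimately show ?thesis
      by (simp only:)
  qed
  finally show ?thesis .
qed

definition kbonacci_sum :: "nat \<Rightarrow> int \<Rightarrow> int" where
  "kbonacci_sum k y = (\<Sum>i\<in>{0..y}. kbonacci k i)"

lemma kbonacci_sum_neg: "y < 0 \<Longrightarrow> kbonacci_sum k y = 0"
  by (simp add: kbonacci_sum_def)

lemma kbonacci_sum_diff: "kbonacci_sum k y - kbonacci_sum k (y - 1) = kbonacci k y"
proof (cases "y \<ge> 0")
  case True
  then have "{0..y} = insert y {0..y - 1}"
    by auto
  then show ?thesis
    by (simp add: kbonacci_sum_def)
qed (simp add: kbonacci_sum_def)

lemma kbonacci_window_sum:
  "(\<Sum>i\<in>{1..int j}. kbonacci k (y - i)) = kbonacci_sum k (y - 1) - kbonacci_sum k (y - 1 - int j)"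
proof (induction j)
  case (Suc j)
  have "{1..int (Suc j)} = insert (int j + 1) {1..int j}"
    by auto
  then show ?case
    using Suc kbonacci_sum_diff[of k "y - 1 - int j"]
    by (simp del: kbonacci.simps add: algebra_simps)
qed simp

lemma kbonacci_sum_rec:
  assumes "y \<ge> 1"
  shows "kbonacci_sum k y = 2 * kbonacci_sum k (y - 1) - kbonacci_sum k (y - 1 - int k)"
proof -
  have "kbonacci k y = kbonacci_sum k (y - 1) - kbonacci_sum k (y - 1 - int k)"
    using assms kbonacci_window_sum[of k y k] by simp
  then show ?thesis
    using kbonacci_sum_diff[of k y] by simp
qed

lemma kbonacci_sum_eq_closed: "real_of_int (kbonacci_sum k (int n)) = kbonacci_closed 2 k n"
proof (induction n rule: less_induct)
  case (less n)
  show ?case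
  proof (cases n)
    case 0
    then show ?thesis
      by (simp add: kbonacci_sum_def kbonacci_closed_def signed_binomial_def)
  next
    case (Suc n')
    have "real_of_int (kbonacci_sum k (int n' - int k))
        = (if k \<le> n' then kbonacci_closed 2 k (n' - k) else 0)"
    proof (cases "k \<le> n'")
      case True
      then have "int n' - int k = int (n' - k)"
        by simp
      then show ?thesis
        using True less[of "n' - k"] Suc by simp
    qed (simp add: kbonacci_sum_neg)
    moreover have "kbonacci_sum k (int n) = 2 * kbonacci_sum k (int n') - kbonacci_sum k (int n' - int k)"
      using kbonacci_sum_rec[of "int n" k] Suc by simp
    ultimately show ?thesis
      using less[of n'] Suc by (simp add: kbonacci_closed_Suc)
  qed
qed

lemma powi_term_eq_signed_binomial:
  fixes x :: "'a::field"
  assumes "j * k \<le> n"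
  shows "(-1) ^ j * of_nat (nat (int n - int j * int k) choose j) * x powi (int n - int j * (int k + 1))
       = signed_binomial x (n - j * k) j"
proof -
  have "int n - int j * int k = int (n - j * k)"
    using assms by (simp add: of_nat_diff)
  then have nat_eq: "nat (int n - int j * int k) = n - j * k"
    by simp
  show ?thesis
  proof (cases "j \<le> n - j * k")
    case True
    then have "int n - int j * (int k + 1) = int (n - j * k - j)"
      using assms by (simp add: algebra_simps of_nat_diff)
    then show ?thesis
      by (simp add: nat_eq signed_binomial_def power_int_of_nat)
  qed (simp add: nat_eq signed_binomial_def binomial_eq_0)
qed

theorem corollary3p1:
  fixes k n :: nat and m :: int
  assumes "k \<ge> 1"
    and "\<lfloor>real n / real (k + 1)\<rfloor> \<le> m" and "m \<le> \<lfloor>real n / real k\<rfloor>"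
  shows "real_of_int (\<Sum>i\<in>{0..int n}. kbonacci k i)
       = (\<Sum>j\<in>{0..m}. (-1) ^ nat j * real (nat (int n - j * int k) choose nat j)
                          * (2::real) powi (int n - j * (int k + 1)))"
proof -
  define M where "M = nat m"
  have "\<lfloor>real n / real (k + 1)\<rfloor> = int (n div (k + 1))" "\<lfloor>real n / real k\<rfloor> = int (n div k)"
    by (metis floor_divide_of_nat_eq of_nat_Suc Suc_eq_plus1)+
  with assms have m_eq: "m = int M" and lower: "n div (k + 1) \<le> M" and upper: "M \<le> n div k"
    by (auto simp: M_def)
  have "{0..m} = int ` {..M}"
    by (auto simp: m_eq image_iff intro!: bexI[where x = "nat _"])
  then have "(\<Sum>j\<in>{0..m}. (-1) ^ nat j * real (nat (int n - j * int k) choose nat j)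
                          * (2::real) powi (int n - j * (int k + 1)))
      = (\<Sum>j\<le>M. (-1) ^ j * real (nat (int n - int j * int k) choose j)
                          * (2::real) powi (int n - int j * (int k + 1)))"
    by (simp add: sum.reindex)
  also have "\<dots> = (\<Sum>j\<le>M. signed_binomial 2 (n - j * k) j)"
    using upper assms(1)
    by (intro sum.cong refl powi_term_eq_signed_binomial) (auto simp: less_eq_div_iff_mult_less_eq intro: order.trans[OF mult_le_mono1])
  also have "\<dots> = real_of_int (kbonacci_sum k (int n))"
    by (simp add: kbonacci_closed_eq_sum_atMost[OF lower] kbonacci_sum_eq_closed)
  finally show ?thesis
    by (simp add: kbonacci_sum_def)
qed

end
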